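(* Fix a time $t\ge0$, a multiplier $\lambda\ge0$, and a differentiable parametric policy $\pi_\theta(a\mid x)$ with $\pi_\theta(a\mid x)>0$ implying $\pi_0(a\mid x)>0$ (common support), and assume $L$ and $C$ are conditionally independent given $(x,a)$. Let $c(x,a)$ be a known cost function, $\hat\pi_0,\hat G,\hat S$ fixed (not depending on $\mathcal{D}$) models with $\hat G(t\mid x,a)>0$ and $\hat\pi_0(a\mid x)>0$ whenever $\pi_\theta(a\mid x)>0$, and $\hat w'(x,a)=\pi_\theta(a\mid x)/\hat\pi_0(a\mid x)$. Define $$\widehat{\nabla_\theta L}_{\mathrm{IPCW\text{-}IPS}}=\frac1n\sum_{i=1}^n \hat w'(x_i,a_i)\Big(\frac{\mathbb{I}\{T_i>t\}}{\hat G(t\mid x_i,a_i)}-\lambda c(x_i,a_i)\Big)\nabla_\theta\log\pi_\theta(a_i\mid x_i),$$ $$\widehat{\nabla_\theta L}_{\mathrm{IPCW\text{-}DR}}=\frac1n\sum_{i=1}^n\Big(\hat w'(x_i,a_i)\Big(\frac{\mathbb{I}\{T_i>t\}}{\hat G(t\mid x_i,a_i)}-\hat S(x_i,a_i,t)\Big)\nabla_\theta\log\pi_\theta(a_i\mid x_i)+\sum_{a\in\mathcal{A}}\pi_\theta(a\mid x_i)\big(\hat S(x_i,a,t)-\lambda c(x_i,a)\big)\nabla_\theta\log\pi_\theta(a\mid x_i)\Big).$$ Let $R_\lambda(x,a,t)=S(x,a,t)-\lambda c(x,a)$ and $g(\theta)=\mathbb{E}_{p(x)\pi_\theta(a\mid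 x)}[R_\lambda(x,a,t)\nabla_\theta\log\pi_\theta(a\mid x)]$ (the Lagrangian policy gradient $\nabla_\theta L(\pi_\theta,t,\lambda)$). Suppose $\hat G(t\mid x,a)=G(t\mid x,a)$ for all $x,a$. Then $\mathbb{E}_{\mathcal{D}}[\widehat{\nabla_\theta L}_{\mathrm{IPCW\text{-}IPS}}]=g(\theta)$ if $\hat\pi_0=\pi_0$, and $\mathbb{E}_{\mathcal{D}}[\widehat{\nabla_\theta L}_{\mathrm{IPCW\text{-}DR}}]=g(\theta)$ if either $\hat\pi_0=\pi_0$ or $\hat S(x,a,t)=S(x,a,t)$ for all $x,a$.
   Context: Let $\mathcal{X}$ be a context space and $\mathcal{A}$ a finite action set. A policy $\pi(a\mid x)$ is a conditional distribution over $\mathcal{A}$ given $x$. The logged data $\mathcal{D}=\{(x_i,a_i,T_i,r_i)\}_{i=1}^n$ consists of $n$ i.i.d. draws generated by $(x,a,L,C)\sim p(x)\pi_0(a\mid x)p(L,C\mid x,a)$ for a logging policy $\pi_0$, where $L\ge0$ is the latent survival time, $C\ge0$ the censoring time, and only $T=\min\{L,C\}$ and $r=\mathbb{I}\{L\le C\}$ are observed. Define $S(x,a,t)=P(L>t\mid x,a)$, $G(t\mid x,a)=P(C>t\mid x,a)$, $V(\pi,t)=\mathbb{E}_{p(x)\pi(a\mid x)}[S(x,a,t)]$, the expected cost $C(\pi)=\mathbb{E}_{p(x)\pi(a\mid x)}[c(x,a)]$, and for a budget $B$ the Lagrangian $L(\pi_\theta,t,\lambda)=V(\pi_\theta,t)-\lambda(C(\pi_\theta)-B)$.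 *)

theory Defs
  imports "HOL-Probability.Probability"
begin

text \<open>
  The conditional law of the
  latent pair (L, C) given (x, a) is a kernel K x a on real x real.
  An observed sample is (x, a, T, r) with T = min L C and r = (L <= C).
\<close>

type_synonym ('x, 'a) obs = "'x \<times> 'a \<times> real \<times> bool"

definition obs_space :: "'x measure \<Rightarrow> ('x, 'a) obs measure" where
  "obs_space px = px \<Otimes>\<^sub>M (count_space UNIV \<Otimes>\<^sub>M (borel \<Otimes>\<^sub>M count_space UNIV))"

definition sample_dist ::
  "'x measure \<Rightarrow> ('x \<Rightarrow> 'a pmf) \<Rightarrow> ('x \<Rightarrow> 'a \<Rightarrow> (real \<times> real) measure) \<Rightarrow> ('x, 'a) obs measure" where
  "sample_dist px pi0 K =
     px \<bind> (\<lambda>x. measure_pmf (pi0 x) \<bind>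
        (\<lambda>a. distr (K x a) (obs_space px) (\<lambda>(l, c). (x, a, min l c, l \<le> c))))"

definition data_dist ::
  "nat \<Rightarrow> 'x measure \<Rightarrow> ('x \<Rightarrow> 'a pmf) \<Rightarrow> ('x \<Rightarrow> 'a \<Rightarrow> (real \<times> real) measure) \<Rightarrow> (nat \<Rightarrow> ('x, 'a) obs) measure" where
  "data_dist n px pi0 K = PiM {..<n} (\<lambda>_. sample_dist px pi0 K)"

definition surv :: "('x \<Rightarrow> 'a \<Rightarrow> (real \<times> real) measure) \<Rightarrow> 'x \<Rightarrow> 'a \<Rightarrow> real \<Rightarrow> real" where
  "surv K x a t = measure (K x a) {z. fst z > t}"

definition cens_surv :: "('x \<Rightarrow> 'a \<Rightarrow> (real \<times> real) measure) \<Rightarrow> real \<Rightarrow> 'x \<Rightarrow> 'a \<Rightarrow> real" where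
  "cens_surv K t x a = measure (K x a) {z. snd z > t}"

definition score :: "('p::euclidean_space \<Rightarrow> 'x \<Rightarrow> 'a pmf) \<Rightarrow> 'p \<Rightarrow> 'x \<Rightarrow> 'a \<Rightarrow> 'p" where
  "score pol \<theta> x a =
     (SOME v. ((\<lambda>\<theta>'. ln (pmf (pol \<theta>' x) a)) has_derivative (\<lambda>h. v \<bullet> h)) (at \<theta>))"

definition ipcw_ips_term ::
  "('p::euclidean_space \<Rightarrow> 'x \<Rightarrow> 'a pmf) \<Rightarrow> 'p \<Rightarrow> ('x \<Rightarrow> 'a pmf) \<Rightarrow> (real \<Rightarrow> 'x \<Rightarrow> 'a \<Rightarrow> real)
     \<Rightarrow> ('x \<Rightarrow> 'a \<Rightarrow> real) \<Rightarrow> real \<Rightarrow> real \<Rightarrow> ('x, 'a) obs \<Rightarrow> 'p" where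
  "ipcw_ips_term pol \<theta> pihat0 Ghat c lam t d =
     (case d of (x, a, T, r) \<Rightarrow>
        (pmf (pol \<theta> x) a / pmf (pihat0 x) a) *\<^sub>R
        ((indicator {T. T > t} T / Ghat t x a - lam * c x a) *\<^sub>R score pol \<theta> x a))"

definition ipcw_dr_term ::
  "('p::euclidean_space \<Rightarrow> 'x \<Rightarrow> 'a::finite pmf) \<Rightarrow> 'p \<Rightarrow> ('x \<Rightarrow> 'a pmf) \<Rightarrow> (real \<Rightarrow> 'x \<Rightarrow> 'a \<Rightarrow> real)
     \<Rightarrow> ('x \<Rightarrow> 'a \<Rightarrow> real \<Rightarrow> real) \<Rightarrow> ('x \<Rightarrow> 'a \<Rightarrow> real) \<Rightarrow> real \<Rightarrow> real \<Rightarrow> ('x, 'a) obs \<Rightarrow> 'p" where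
  "ipcw_dr_term pol \<theta> pihat0 Ghat Shat c lam t d =
     (case d of (x, a, T, r) \<Rightarrow>
        (pmf (pol \<theta> x) a / pmf (pihat0 x) a) *\<^sub>R
          ((indicator {T. T > t} T / Ghat t x a - Shat x a t) *\<^sub>R score pol \<theta> x a)
        + (\<Sum>b\<in>UNIV. pmf (pol \<theta> x) b *\<^sub>R ((Shat x b t - lam * c x b) *\<^sub>R score pol \<theta> x b)))"

definition emp_avg :: "nat \<Rightarrow> (('x, 'a) obs \<Rightarrow> 'p::real_vector) \<Rightarrow> (nat \<Rightarrow> ('x, 'a) obs) \<Rightarrow> 'p" where
  "emp_avg n f D = (1 / real n) *\<^sub>R (\<Sum>i<n. f (D i))"

definition lagr_grad ::
  "'x measure \<Rightarrow> ('p::euclidean_space \<Rightarrow> 'x \<Rightarrow> 'a::finite pmf) \<Rightarrow> 'p \<Rightarrow> ('x \<Rightarrow> 'a \<Rightarrow> (real \<times> real) measure)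
     \<Rightarrow> ('x \<Rightarrow> 'a \<Rightarrow> real) \<Rightarrow> real \<Rightarrow> real \<Rightarrow> 'p" where
  "lagr_grad px pol \<theta> K c lam t =
     (\<integral>x. (\<Sum>a\<in>UNIV. pmf (pol \<theta> x) a *\<^sub>R ((surv K x a t - lam * c x a) *\<^sub>R score pol \<theta> x a)) \<partial>px)"

end

theory Submission
  imports Defs
begin

(* Each estimator is an average of i.i.d. terms, so it has the expectation of a single term.
   Given (x, a), the only randomness left in a term is the indicator of T > t, i.e. of
   L > t and C > t, whose probability is S(x,a,t) G(t|x,a) by conditional independence;
   dividing by Ghat = G leaves S.  Averaging over a ~ pi0 turns the weight pi_theta / pihat0
   into pi_theta when pihat0 = pi0.  The IPS estimator is the DR estimator with outcome model
   Shat = lam c, and in the DR estimator the weighted residual S - Shat is either correctly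
   reweighted (pihat0 = pi0) or zero (Shat = S), while the direct term
   sum_a pi_theta (Shat - lam c) grad log pi_theta supplies the rest. *)

lemma borel_measurable_integrable_bind:
  assumes N: "N \<in> measurable M (subprob_algebra B)" and f: "integrable (M \<bind> N) f"
    and ne: "space M \<noteq> {}"
  shows "f \<in> borel_measurable B"
proof -
  have "sets (M \<bind> N) = sets B"
    by (rule sets_bind[OF sets_kernel[OF N] ne])
  then show ?thesis
    using borel_measurable_integrable[OF f] measurable_cong_sets by blast
qed

lemma integrable_bindD:
  fixes f :: "_ \<Rightarrow> 'b::{banach, second_countable_topology}"
  assumes N: "N \<in> measurable M (subprob_algebra B)" and f: "integrable (M \<bind> N) f"
    and ne: "space M \<noteq> {}"
  shows "AE x in M. integrable (N x) f" and "integrable M (\<lambda>x. \<integral>y. f y \<partial>N x)"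
proof -
  have fm [measurable]: "f \<in> borel_measurable B"
    by (rule borel_measurable_integrable_bind[OF N f ne])
  have "(\<integral>\<^sup>+ y. norm (f y) \<partial>(M \<bind> N)) = (\<integral>\<^sup>+ x. \<integral>\<^sup>+ y. norm (f y) \<partial>N x \<partial>M)"
    by (rule nn_integral_bind[OF _ N]) measurable
  then have fin: "(\<integral>\<^sup>+ x. \<integral>\<^sup>+ y. norm (f y) \<partial>N x \<partial>M) < \<infinity>"
    using f by (simp add: integrable_iff_bounded)
  have "AE x in M. (\<integral>\<^sup>+ y. norm (f y) \<partial>N x) \<noteq> \<infinity>"
    using fin by (intro nn_integral_PInf_AE measurable_compose[OF N nn_integral_measurable_subprob_algebra]) auto
  with AE_space show "AE x in M. integrable (N x) f"
  proof eventually_elim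
    case (elim x)
    moreover have "f \<in> borel_measurable (N x)"
      using fm measurable_cong_sets[OF sets_kernel[OF N] refl] elim by blast
    ultimately show "integrable (N x) f"
      by (auto intro: integrableI_bounded simp: less_top)
  qed
  show "integrable M (\<lambda>x. \<integral>y. f y \<partial>N x)"
  proof (rule integrableI_bounded)
    show "(\<lambda>x. \<integral>y. f y \<partial>N x) \<in> borel_measurable M"
      by (rule measurable_compose[OF N integral_measurable_subprob_algebra[OF fm]])
    have "(\<integral>\<^sup>+ x. norm (\<integral>y. f y \<partial>N x) \<partial>M) \<le> (\<integral>\<^sup>+ x. \<integral>\<^sup>+ y. norm (f y) \<partial>N x \<partial>M)"
      by (intro nn_integral_mono) (metis integral_norm_bound_ennreal not_integrable_integral_eq norm_zero ennreal_0 zero_le)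
    then show "(\<integral>\<^sup>+ x. norm (\<integral>y. f y \<partial>N x) \<partial>M) < \<infinity>"
      using fin by auto
  qed
qed

lemma integral_bind_nonneg:
  fixes f :: "_ \<Rightarrow> real"
  assumes N: "N \<in> measurable M (subprob_algebra B)" and f: "integrable (M \<bind> N) f"
    and ne: "space M \<noteq> {}" and nonneg: "\<And>y. 0 \<le> f y"
  shows "(\<integral>y. f y \<partial>(M \<bind> N)) = (\<integral>x. \<integral>y. f y \<partial>N x \<partial>M)"
proof -
  have fm [measurable]: "f \<in> borel_measurable B"
    by (rule borel_measurable_integrable_bind[OF N f ne])
  note parts = integrable_bindD[OF N f ne]
  have "(\<integral>y. f y \<partial>(M \<bind> N)) = enn2real (\<integral>\<^sup>+ y. f y \<partial>(M \<bind> N))"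
    using f nonneg by (simp add: integral_eq_nn_integral)
  also have "(\<integral>\<^sup>+ y. f y \<partial>(M \<bind> N)) = (\<integral>\<^sup>+ x. \<integral>\<^sup>+ y. f y \<partial>N x \<partial>M)"
    by (rule nn_integral_bind[OF _ N]) measurable
  also have "\<dots> = (\<integral>\<^sup>+ x. (\<integral>y. f y \<partial>N x) \<partial>M)"
    using parts(1) by (intro nn_integral_cong_AE) (auto elim!: eventually_mono simp: nn_integral_eq_integral nonneg)
  also have "enn2real \<dots> = (\<integral>x. \<integral>y. f y \<partial>N x \<partial>M)"
    using parts(2) nonneg by (simp add: integral_eq_nn_integral integral_nonneg)
  finally show ?thesis .
qed

lemma integral_bind_real:
  fixes f :: "_ \<Rightarrow> real"
  assumes N: "N \<in> measurable M (subprob_algebra B)" and f: "integrable (M \<bind> N) f"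
    and ne: "space M \<noteq> {}"
  shows "(\<integral>y. f y \<partial>(M \<bind> N)) = (\<integral>x. \<integral>y. f y \<partial>N x \<partial>M)"
proof -
  define fp fn where "fp y = max (f y) 0" and "fn y = max (- f y) 0" for y
  have f_split: "f y = fp y - fn y" for y
    by (simp add: fp_def fn_def)
  have fp: "integrable (M \<bind> N) fp" and fn: "integrable (M \<bind> N) fn"
    unfolding fp_def fn_def using f by auto
  note fp_parts = integrable_bindD[OF N fp ne] and fn_parts = integrable_bindD[OF N fn ne]
  have "(\<integral>y. f y \<partial>(M \<bind> N)) = (\<integral>y. fp y \<partial>(M \<bind> N)) - (\<integral>y. fn y \<partial>(M \<bind> N))"
    using fp fn by (simp add: f_split)
  also have "\<dots> = (\<integral>x. \<integral>y. fp y \<partial>N x \<partial>M) - (\<integral>x. \<integral>y. fn y \<partial>N x \<partial>M)"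
    using integral_bind_nonneg[OF N fp ne] integral_bind_nonneg[OF N fn ne] by (simp add: fp_def fn_def)
  also have "\<dots> = (\<integral>x. (\<integral>y. fp y \<partial>N x) - (\<integral>y. fn y \<partial>N x) \<partial>M)"
    using fp_parts(2) fn_parts(2) by simp
  also have "\<dots> = (\<integral>x. \<integral>y. f y \<partial>N x \<partial>M)"
  proof (rule integral_cong_AE)
    show "(\<lambda>x. \<integral>y. f y \<partial>N x) \<in> borel_measurable M"
      by (rule measurable_compose[OF N integral_measurable_subprob_algebra[OF borel_measurable_integrable_bind[OF N f ne]]])
    show "AE x in M. (\<integral>y. fp y \<partial>N x) - (\<integral>y. fn y \<partial>N x) = (\<integral>y. f y \<partial>N x)"
      using fp_parts(1) fn_parts(1) by eventually_elim (simp add: f_split)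
  qed (use fp_parts(2) fn_parts(2) in auto)
  finally show ?thesis .
qed

lemma integral_bind_euclidean:
  fixes f :: "_ \<Rightarrow> 'b::euclidean_space"
  assumes N: "N \<in> measurable M (subprob_algebra B)" and f: "integrable (M \<bind> N) f"
    and ne: "space M \<noteq> {}"
  shows "(\<integral>y. f y \<partial>(M \<bind> N)) = (\<integral>x. \<integral>y. f y \<partial>N x \<partial>M)"
proof (rule euclidean_eqI)
  fix b :: 'b
  have fm [measurable]: "f \<in> borel_measurable B"
    by (rule borel_measurable_integrable_bind[OF N f ne])
  note parts = integrable_bindD[OF N f ne]
  have "(\<integral>y. f y \<partial>(M \<bind> N)) \<bullet> b = (\<integral>y. f y \<bullet> b \<partial>(M \<bind> N))"
    using f by simp
  also have "\<dots> = (\<integral>x. \<integral>y. f y \<bullet> b \<partial>N x \<partial>M)"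
    using f by (intro integral_bind_real[OF N _ ne]) simp
  also have "\<dots> = (\<integral>x. (\<integral>y. f y \<partial>N x) \<bullet> b \<partial>M)"
  proof (rule integral_cong_AE)
    show "(\<lambda>x. \<integral>y. f y \<bullet> b \<partial>N x) \<in> borel_measurable M"
      by (rule measurable_compose[OF N integral_measurable_subprob_algebra]) measurable
    show "(\<lambda>x. (\<integral>y. f y \<partial>N x) \<bullet> b) \<in> borel_measurable M"
      using measurable_compose[OF N integral_measurable_subprob_algebra[OF fm]] by measurable
    show "AE x in M. (\<integral>y. f y \<bullet> b \<partial>N x) = (\<integral>y. f y \<partial>N x) \<bullet> b"
      using parts(1) by eventually_elim simp
  qed
  also have "\<dots> = (\<integral>x. \<integral>y. f y \<partial>N x \<partial>M) \<bullet> b"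
    using parts(2) by simp
  finally show "(\<integral>y. f y \<partial>(M \<bind> N)) \<bullet> b = (\<integral>x. \<integral>y. f y \<partial>N x \<partial>M) \<bullet> b" .
qed

lemma integral_emp_avg_PiM:
  fixes f :: "_ \<Rightarrow> 'p::euclidean_space"
  assumes M: "prob_space M" and f: "integrable M f" and n: "n > 0"
  shows "(\<integral>D. emp_avg n f D \<partial>PiM {..<n} (\<lambda>_. M)) = (\<integral>y. f y \<partial>M)"
proof -
  have fm: "f \<in> borel_measurable M"
    using f by auto
  have component: "(\<lambda>D. D i) \<in> measurable (PiM {..<n} (\<lambda>_. M)) M"
    and law: "distr (PiM {..<n} (\<lambda>_. M)) M (\<lambda>D. D i) = M" if "i < n" for i
    using measurable_component_singleton[of i "{..<n}" "\<lambda>_. M"] distr_PiM_component[of "{..<n}" "\<lambda>_. M" i]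
      M that by simp_all
  have integrable_i: "integrable (PiM {..<n} (\<lambda>_. M)) (\<lambda>D. f (D i))"
    and integral_i: "(\<integral>D. f (D i) \<partial>PiM {..<n} (\<lambda>_. M)) = (\<integral>y. f y \<partial>M)" if "i < n" for i
    using integrable_distr_eq[OF component[OF that] fm] integral_distr[OF component[OF that] fm]
      law[OF that] f by simp_all
  have "(\<integral>D. emp_avg n f D \<partial>PiM {..<n} (\<lambda>_. M))
      = (1 / real n) *\<^sub>R (\<Sum>i<n. \<integral>D. f (D i) \<partial>PiM {..<n} (\<lambda>_. M))"
    unfolding emp_avg_def using integrable_i by simp
  also have "\<dots> = (\<integral>y. f y \<partial>M)"
    using n by (simp add: integral_i sum_constant_scaleR)
  finally show ?thesis .
qed

lemma measurable_measure_pmf_finite: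
  fixes p :: "'x \<Rightarrow> 'a::finite pmf"
  assumes "\<And>a. (\<lambda>x. pmf (p x) a) \<in> borel_measurable M"
  shows "(\<lambda>x. measure_pmf (p x)) \<in> measurable M (subprob_algebra (count_space UNIV))"
proof (rule measurable_subprob_algebra)
  fix A :: "'a set"
  have "(\<lambda>x. ennreal (\<Sum>a\<in>A. pmf (p x) a)) \<in> borel_measurable M"
    using assms by measurable
  then show "(\<lambda>x. emeasure (measure_pmf (p x)) A) \<in> borel_measurable M"
    by (simp add: emeasure_measure_pmf_finite)
qed (auto simp: subprob_space_measure_pmf)

lemma measure_Times_indep:
  fixes K :: "(real \<times> real) measure"
  assumes K: "prob_space K" and sets_K: "sets K = sets (lborel \<Otimes>\<^sub>M lborel)"
    and indep: "K = distr K lborel fst \<Otimes>\<^sub>M distr K lborel snd"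
    and A: "A \<in> sets borel" and B: "B \<in> sets borel"
  shows "measure K (A \<times> B) = measure K (A \<times> UNIV) * measure K (UNIV \<times> B)"
proof -
  define K1 K2 where "K1 = distr K lborel fst" and "K2 = distr K lborel snd"
  have "fst \<in> measurable K lborel" "snd \<in> measurable K lborel"
    unfolding measurable_cong_sets[OF sets_K refl] by simp_all
  then have "prob_space K1" "prob_space K2"
    unfolding K1_def K2_def by (auto intro: prob_space.prob_space_distr[OF K])
  interpret K1: prob_space K1 by fact
  interpret K2: prob_space K2 by fact
  have prod: "measure K (A \<times> B) = measure K1 A * measure K2 B"
    if "A \<in> sets borel" "B \<in> sets borel" for A B
  proof -
    have "emeasure (K1 \<Otimes>\<^sub>M K2) (A \<times> B) = emeasure K1 A * emeasure K2 B"
      using that by (intro K2.emeasure_pair_measure_Times) (simp_all add: K1_def K2_def)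
    then have "emeasure K (A \<times> B) = ennreal (measure K1 A * measure K2 B)"
      using indep[folded K1_def K2_def] by (simp add: K1.emeasure_eq_measure K2.emeasure_eq_measure ennreal_mult)
    then show ?thesis
      by (simp add: measure_def)
  qed
  have "measure K1 UNIV = 1" "measure K2 UNIV = 1"
    using K1.prob_space K2.prob_space by (simp_all add: K1_def K2_def)
  then show ?thesis
    using prod[OF A B] prod[OF A sets.top] prod[OF sets.top B] by simp
qed

lemma pmf_mult_importance_weight:
  assumes "pmf p a > 0 \<Longrightarrow> pmf q a > 0"
  shows "pmf q a * (pmf p a / pmf q a) = pmf p a"
  using assms pmf_nonneg[of p a] by (cases "pmf p a = 0") auto

locale censored_logging =
  fixes px :: "'x measure" and pi0 :: "'x \<Rightarrow> 'a::finite pmf"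
    and K :: "'x \<Rightarrow> 'a \<Rightarrow> (real \<times> real) measure"
  assumes px: "prob_space px"
    and pi0_meas: "\<And>a. (\<lambda>x. pmf (pi0 x) a) \<in> borel_measurable px"
    and K_meas: "\<And>a. (\<lambda>x. K x a) \<in> measurable px (subprob_algebra (lborel \<Otimes>\<^sub>M lborel))"
    and K_prob: "\<And>x a. x \<in> space px \<Longrightarrow> prob_space (K x a)"
    and K_indep: "\<And>x a. x \<in> space px \<Longrightarrow> K x a = distr (K x a) lborel fst \<Otimes>\<^sub>M distr (K x a) lborel snd"
begin

abbreviation observe :: "'x \<Rightarrow> 'a \<Rightarrow> real \<times> real \<Rightarrow> ('x, 'a) obs" where
  "observe x a \<equiv> \<lambda>(l, c). (x, a, min l c, l \<le> c)"

abbreviation obs_kernel :: "'x \<Rightarrow> ('x, 'a) obs measure" where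
  "obs_kernel x \<equiv> measure_pmf (pi0 x) \<bind> (\<lambda>a. distr (K x a) (obs_space px) (observe x a))"

lemma sample_dist_eq: "sample_dist px pi0 K = px \<bind> obs_kernel"
  unfolding sample_dist_def ..

lemma space_px_nonempty: "space px \<noteq> {}"
  using prob_space.not_empty[OF px] .

lemma sets_K: "x \<in> space px \<Longrightarrow> sets (K x a) = sets (lborel \<Otimes>\<^sub>M lborel)"
  using sets_kernel[OF K_meas] .

lemma measurable_observe:
  "x \<in> space px \<Longrightarrow> observe x a \<in> measurable (K x a) (obs_space px)"
  unfolding measurable_cong_sets[OF sets_K refl] obs_space_def by measurable

lemma measurable_obs_kernel: "obs_kernel \<in> measurable px (subprob_algebra (obs_space px))"
proof (rule measurable_bind[OF measurable_measure_pmf_finite[OF pi0_meas]])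
  have "(\<lambda>y. K (fst y) (snd y)) \<in> measurable (px \<Otimes>\<^sub>M count_space UNIV) (subprob_algebra (lborel \<Otimes>\<^sub>M lborel))"
    by (rule measurable_compose_countable'[where f="\<lambda>a y. K (fst y) a" and g=snd and I=UNIV])
      (auto intro: measurable_compose[OF measurable_fst K_meas])
  moreover have "(\<lambda>(y, z). observe (fst y) (snd y) z)
      \<in> measurable ((px \<Otimes>\<^sub>M count_space UNIV) \<Otimes>\<^sub>M (lborel \<Otimes>\<^sub>M lborel)) (obs_space px)"
    unfolding obs_space_def by measurable
  ultimately show "(\<lambda>y. distr (K (fst y) (snd y)) (obs_space px) (observe (fst y) (snd y)))
      \<in> measurable (px \<Otimes>\<^sub>M count_space UNIV) (subprob_algebra (obs_space px))"
    by (rule measurable_distr2[rotated])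
qed

lemma prob_space_distr_observe:
  "x \<in> space px \<Longrightarrow> prob_space (distr (K x a) (obs_space px) (observe x a))"
  by (rule prob_space.prob_space_distr[OF K_prob measurable_observe])

lemma measurable_distr_observe:
  "x \<in> space px \<Longrightarrow> (\<lambda>a. distr (K x a) (obs_space px) (observe x a))
     \<in> measurable (measure_pmf (pi0 x)) (subprob_algebra (obs_space px))"
  using prob_space_distr_observe by (auto simp: space_subprob_algebra intro!: prob_space_imp_subprob_space)

lemma prob_space_sample_dist: "prob_space (sample_dist px pi0 K)"
proof -
  have "prob_space (obs_kernel x)" if "x \<in> space px" for x
    using prob_space_distr_observe[OF that] measurable_distr_observe[OF that]
    by (intro prob_space.prob_space_bind[OF measure_pmf.prob_space_axioms]) auto
  then show ?thesis
    unfolding sample_dist_eq by (intro prob_space.prob_space_bind[OF px _ measurable_obs_kernel] AE_I2)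
qed

lemma measure_both_exceed:
  assumes "x \<in> space px"
  shows "measure (K x a) ({t<..} \<times> {t<..}) = surv K x a t * cens_surv K t x a"
proof -
  have exceed: "{z. t < fst z} = {t<..} \<times> UNIV" "{z. t < snd z} = UNIV \<times> {t<..}"
    by auto
  show ?thesis
    unfolding surv_def cens_surv_def exceed
    using measure_Times_indep[OF K_prob[OF assms] sets_K[OF assms] K_indep[OF assms], of "{t<..}" "{t<..}"]
    by simp
qed

lemma integral_obs_kernel:
  fixes f :: "('x, 'a) obs \<Rightarrow> 'p::euclidean_space" and u v :: "'a \<Rightarrow> 'p"
  assumes x: "x \<in> space px" and fm: "f \<in> borel_measurable (obs_space px)"
    and f_eq: "\<And>a T r. f (x, a, T, r) = u a + indicator {T. T > t} T *\<^sub>R v a"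
  shows "(\<integral>y. f y \<partial>obs_kernel x)
    = (\<Sum>a\<in>UNIV. pmf (pi0 x) a *\<^sub>R (u a + (surv K x a t * cens_surv K t x a) *\<^sub>R v a))"
proof -
  note N = measurable_distr_observe[OF x]
  define E where "E = {t<..} \<times> ({t<..} :: real set)"
  have f_observe: "f \<circ> observe x a = (\<lambda>z. u a + indicator E z *\<^sub>R v a)" for a
    by (auto simp: f_eq E_def indicator_def)
  have finite_K: "finite_measure (K x a)" for a
    using K_prob[OF x] by (simp add: prob_space_def)
  have indicator_E: "integrable (K x a) (indicator E :: _ \<Rightarrow> real)" for a
    using finite_measure.emeasure_finite[OF finite_K]
    unfolding E_def by (intro integrable_real_indicator) (simp_all add: sets_K[OF x] less_top)
  have integrable_a: "integrable (distr (K x a) (obs_space px) (observe x a)) f" for a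
    unfolding integrable_distr_eq[OF measurable_observe[OF x] fm] f_observe[unfolded comp_def]
    by (intro Bochner_Integration.integrable_add finite_measure.integrable_const[OF finite_K]
        integrable_scaleR_left indicator_E)
  have integral_a: "(\<integral>y. f y \<partial>distr (K x a) (obs_space px) (observe x a))
      = u a + (surv K x a t * cens_surv K t x a) *\<^sub>R v a" for a
  proof -
    interpret Ka: prob_space "K x a"
      using K_prob[OF x] .
    have "E \<in> sets (K x a)"
      unfolding E_def sets_K[OF x] by simp
    have "(\<integral>y. f y \<partial>distr (K x a) (obs_space px) (observe x a)) = (\<integral>z. u a + indicator E z *\<^sub>R v a \<partial>K x a)"
      using integral_distr[OF measurable_observe[OF x] fm] f_observe by (simp add: comp_def)
    also have "\<dots> = u a + measure (K x a) E *\<^sub>R v a"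
      using indicator_E \<open>E \<in> sets (K x a)\<close> Ka.prob_space by (simp add: Int_absorb2 sets.sets_into_space)
    finally show ?thesis
      unfolding E_def measure_both_exceed[OF x] .
  qed
  have "integrable (obs_kernel x) f"
  proof (rule integrableI_bounded)
    show "f \<in> borel_measurable (obs_kernel x)"
      using fm measurable_cong_sets[OF sets_bind[OF sets_kernel[OF N]] refl] by simp
    have "(\<integral>\<^sup>+ y. norm (f y) \<partial>obs_kernel x)
        = (\<Sum>a\<in>set_pmf (pi0 x). (\<integral>\<^sup>+ y. norm (f y) \<partial>distr (K x a) (obs_space px) (observe x a)) * pmf (pi0 x) a)"
      using fm by (simp add: nn_integral_bind[OF _ N] nn_integral_measure_pmf_finite)
    also have "\<dots> < \<infinity>"
      using integrable_a by (simp add: integrable_iff_bounded ennreal_mult_less_top)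
    finally show "(\<integral>\<^sup>+ y. norm (f y) \<partial>obs_kernel x) < \<infinity>" .
  qed
  then have "(\<integral>y. f y \<partial>obs_kernel x) = (\<integral>a. (\<integral>y. f y \<partial>distr (K x a) (obs_space px) (observe x a)) \<partial>pi0 x)"
    by (intro integral_bind_euclidean[OF N]) simp_all
  also have "\<dots> = (\<Sum>a\<in>UNIV. pmf (pi0 x) a *\<^sub>R (u a + (surv K x a t * cens_surv K t x a) *\<^sub>R v a))"
    by (subst integral_measure_pmf[of UNIV]) (simp_all add: integral_a)
  finally show ?thesis .
qed

lemma integral_sample_dist_censored:
  fixes f :: "('x, 'a) obs \<Rightarrow> 'p::euclidean_space" and u v :: "'x \<Rightarrow> 'a \<Rightarrow> 'p"
  assumes f: "integrable (sample_dist px pi0 K) f"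
    and f_eq: "\<And>x a T r. x \<in> space px \<Longrightarrow> f (x, a, T, r) = u x a + indicator {T. T > t} T *\<^sub>R v x a"
  shows "(\<integral>y. f y \<partial>sample_dist px pi0 K)
    = (\<integral>x. (\<Sum>a\<in>UNIV. pmf (pi0 x) a *\<^sub>R (u x a + (surv K x a t * cens_surv K t x a) *\<^sub>R v x a)) \<partial>px)"
proof -
  note f' = f[unfolded sample_dist_eq] and N = measurable_obs_kernel
  have "(\<integral>y. f y \<partial>sample_dist px pi0 K) = (\<integral>x. (\<integral>y. f y \<partial>obs_kernel x) \<partial>px)"
    unfolding sample_dist_eq by (rule integral_bind_euclidean[OF N f' space_px_nonempty])
  also have "\<dots> = (\<integral>x. (\<Sum>a\<in>UNIV. pmf (pi0 x) a *\<^sub>R (u x a + (surv K x a t * cens_surv K t x a) *\<^sub>R v x a)) \<partial>px)"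
    by (intro Bochner_Integration.integral_cong refl integral_obs_kernel f_eq
        borel_measurable_integrable_bind[OF N f' space_px_nonempty])
  finally show ?thesis .
qed

lemma integral_sample_dist_ipcw:
  fixes f :: "('x, 'a) obs \<Rightarrow> 'p::euclidean_space" and w h :: "'x \<Rightarrow> 'a \<Rightarrow> real"
    and s :: "'x \<Rightarrow> 'a \<Rightarrow> 'p" and m :: "'x \<Rightarrow> 'p"
  assumes f: "integrable (sample_dist px pi0 K) f"
    and f_eq: "\<And>x a T r. x \<in> space px \<Longrightarrow>
      f (x, a, T, r) = (w x a * (indicator {T. T > t} T / cens_surv K t x a - h x a)) *\<^sub>R s x a + m x"
    and cens_surv_pos: "\<And>x a. w x a \<noteq> 0 \<Longrightarrow> cens_surv K t x a > 0"
  shows "(\<integral>y. f y \<partial>sample_dist px pi0 K)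
    = (\<integral>x. (\<Sum>a\<in>UNIV. (pmf (pi0 x) a * w x a * (surv K x a t - h x a)) *\<^sub>R s x a) + m x \<partial>px)"
proof -
  define G where "G x a = cens_surv K t x a" for x a
  have "(\<integral>y. f y \<partial>sample_dist px pi0 K) = (\<integral>x. (\<Sum>a\<in>UNIV. pmf (pi0 x) a *\<^sub>R
      (((- w x a * h x a) *\<^sub>R s x a + m x) + (surv K x a t * G x a) *\<^sub>R ((w x a / G x a) *\<^sub>R s x a))) \<partial>px)"
    unfolding G_def
    by (rule integral_sample_dist_censored[OF f]) (simp add: f_eq algebra_simps)
  also have "\<dots> = (\<integral>x. (\<Sum>a\<in>UNIV. (pmf (pi0 x) a * w x a * (surv K x a t - h x a)) *\<^sub>R s x a) + m x \<partial>px)"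
  proof (intro Bochner_Integration.integral_cong refl)
    fix x
    have "surv K x a t * G x a * (w x a / G x a) = surv K x a t * w x a" for a
      using cens_surv_pos[of x a] by (cases "w x a = 0") (simp_all add: G_def)
    then have "pmf (pi0 x) a *\<^sub>R (((- w x a * h x a) *\<^sub>R s x a + m x)
        + (surv K x a t * G x a) *\<^sub>R ((w x a / G x a) *\<^sub>R s x a))
      = (pmf (pi0 x) a * w x a * (surv K x a t - h x a)) *\<^sub>R s x a + pmf (pi0 x) a *\<^sub>R m x" for a
      by (simp add: algebra_simps)
    moreover have "(\<Sum>a\<in>UNIV. pmf (pi0 x) a *\<^sub>R m x) = m x"
      by (simp add: scaleR_sum_left[symmetric] sum_pmf_eq_1)
    ultimately show "(\<Sum>a\<in>UNIV. pmf (pi0 x) a *\<^sub>R (((- w x a * h x a) *\<^sub>R s x a + m x)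
        + (surv K x a t * G x a) *\<^sub>R ((w x a / G x a) *\<^sub>R s x a)))
      = (\<Sum>a\<in>UNIV. (pmf (pi0 x) a * w x a * (surv K x a t - h x a)) *\<^sub>R s x a) + m x"
      by (simp add: sum.distrib)
  qed
  finally show ?thesis .
qed

lemma integral_ipcw_dr_term:
  fixes pol :: "'p::euclidean_space \<Rightarrow> 'x \<Rightarrow> 'a pmf"
  assumes integrable: "integrable (sample_dist px pi0 K) (ipcw_dr_term pol \<theta> pihat0 Ghat Shat c lam t)"
    and correct: "pihat0 = pi0 \<or> (\<forall>x a. Shat x a t = surv K x a t)"
    and common_support: "\<And>x a. pmf (pol \<theta> x) a > 0 \<Longrightarrow> pmf (pi0 x) a > 0"
    and Ghat_pos: "\<And>x a. pmf (pol \<theta> x) a > 0 \<Longrightarrow> Ghat t x a > 0"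
    and Ghat_eq: "\<And>x a. Ghat t x a = cens_surv K t x a"
  shows "(\<integral>y. ipcw_dr_term pol \<theta> pihat0 Ghat Shat c lam t y \<partial>sample_dist px pi0 K)
    = lagr_grad px pol \<theta> K c lam t"
proof -
  define w where "w x a = pmf (pol \<theta> x) a / pmf (pihat0 x) a" for x a
  define direct where
    "direct x = (\<Sum>b\<in>UNIV. pmf (pol \<theta> x) b *\<^sub>R ((Shat x b t - lam * c x b) *\<^sub>R score pol \<theta> x b))" for x
  have "w x a \<noteq> 0 \<Longrightarrow> cens_surv K t x a > 0" for x a
    using Ghat_pos[of x a] pmf_nonneg[of "pol \<theta> x" a] by (auto simp: w_def Ghat_eq)
  then have "(\<integral>y. ipcw_dr_term pol \<theta> pihat0 Ghat Shat c lam t y \<partial>sample_dist px pi0 K)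
    = (\<integral>x. (\<Sum>a\<in>UNIV. (pmf (pi0 x) a * w x a * (surv K x a t - Shat x a t)) *\<^sub>R score pol \<theta> x a)
        + direct x \<partial>px)"
    by (intro integral_sample_dist_ipcw[OF integrable]) (simp_all add: ipcw_dr_term_def Ghat_eq w_def direct_def)
  also have "\<dots> = lagr_grad px pol \<theta> K c lam t"
    unfolding lagr_grad_def
  proof (intro Bochner_Integration.integral_cong refl)
    fix x
    have weight: "pmf (pi0 x) a * w x a * (surv K x a t - Shat x a t)
        = pmf (pol \<theta> x) a * (surv K x a t - Shat x a t)" for a
      using correct
    proof
      assume "pihat0 = pi0"
      then show ?thesis
        unfolding w_def using pmf_mult_importance_weight[OF common_support] by simp
    qed simp
    have "(pmf (pi0 x) a * w x a * (surv K x a t - Shat x a t)) *\<^sub>R score pol \<theta> x a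
        + pmf (pol \<theta> x) a *\<^sub>R ((Shat x a t - lam * c x a) *\<^sub>R score pol \<theta> x a)
      = pmf (pol \<theta> x) a *\<^sub>R ((surv K x a t - lam * c x a) *\<^sub>R score pol \<theta> x a)" for a
      unfolding weight scaleR_scaleR scaleR_add_left[symmetric] by (simp add: algebra_simps)
    then show "(\<Sum>a\<in>UNIV. (pmf (pi0 x) a * w x a * (surv K x a t - Shat x a t)) *\<^sub>R score pol \<theta> x a) + direct x
      = (\<Sum>a\<in>UNIV. pmf (pol \<theta> x) a *\<^sub>R ((surv K x a t - lam * c x a) *\<^sub>R score pol \<theta> x a))"
      by (simp add: direct_def sum.distrib[symmetric])
  qed
  finally show ?thesis .
qed

end

lemma ipcw_ips_term_eq_dr_term:
  "ipcw_ips_term pol \<theta> pihat0 Ghat c lam t = ipcw_dr_term pol \<theta> pihat0 Ghat (\<lambda>x a t. lam * c x a) c lam t"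
  by (simp add: fun_eq_iff ipcw_ips_term_def ipcw_dr_term_def)

theorem mainTheorem5:
  fixes px :: "'x measure"
    and pi0 pihat0 :: "'x \<Rightarrow> 'a::finite pmf"
    and pol :: "'p::euclidean_space \<Rightarrow> 'x \<Rightarrow> 'a pmf"
    and \<theta> :: 'p
    and K :: "'x \<Rightarrow> 'a \<Rightarrow> (real \<times> real) measure"
    and c :: "'x \<Rightarrow> 'a \<Rightarrow> real"
    and Ghat :: "real \<Rightarrow> 'x \<Rightarrow> 'a \<Rightarrow> real"
    and Shat :: "'x \<Rightarrow> 'a \<Rightarrow> real \<Rightarrow> real"
    and t lam :: real and n :: nat
  assumes px: "prob_space px"
    and pi0_meas: "\<And>a. (\<lambda>x. pmf (pi0 x) a) \<in> borel_measurable px"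
    and K_meas: "\<And>a. (\<lambda>x. K x a) \<in> measurable px (subprob_algebra (lborel \<Otimes>\<^sub>M lborel))"
    and K_prob: "\<And>x a. x \<in> space px \<Longrightarrow> prob_space (K x a)"
    and K_nonneg: "\<And>x a. x \<in> space px \<Longrightarrow> AE z in K x a. 0 \<le> fst z \<and> 0 \<le> snd z"
    and cond_indep: "\<And>x a. x \<in> space px \<Longrightarrow>
          K x a = distr (K x a) lborel fst \<Otimes>\<^sub>M distr (K x a) lborel snd"
    and pol_diff: "\<And>\<theta>' x a. (\<lambda>\<phi>. pmf (pol \<phi> x) a) differentiable (at \<theta>')"
    and common_support: "\<And>x a. pmf (pol \<theta> x) a > 0 \<Longrightarrow> pmf (pi0 x) a > 0"
    and Ghat_pos: "\<And>x a. pmf (pol \<theta> x) a > 0 \<Longrightarrow> Ghat t x a > 0"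
    and pihat0_pos: "\<And>x a. pmf (pol \<theta> x) a > 0 \<Longrightarrow> pmf (pihat0 x) a > 0"
    and t: "t \<ge> 0" and lam: "lam \<ge> 0" and n: "n > 0"
    and int_ips: "integrable (sample_dist px pi0 K) (ipcw_ips_term pol \<theta> pihat0 Ghat c lam t)"
    and int_dr: "integrable (sample_dist px pi0 K) (ipcw_dr_term pol \<theta> pihat0 Ghat Shat c lam t)"
    and Ghat_eq: "\<And>x a. Ghat t x a = cens_surv K t x a"
  shows "(pihat0 = pi0 \<longrightarrow>
            (\<integral>D. emp_avg n (ipcw_ips_term pol \<theta> pihat0 Ghat c lam t) D \<partial>data_dist n px pi0 K)
              = lagr_grad px pol \<theta> K c lam t)
       \<and> ((pihat0 = pi0 \<or> (\<forall>x a. Shat x a t = surv K x a t)) \<longrightarrow>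
            (\<integral>D. emp_avg n (ipcw_dr_term pol \<theta> pihat0 Ghat Shat c lam t) D \<partial>data_dist n px pi0 K)
              = lagr_grad px pol \<theta> K c lam t)"
proof -
  (* The identities hold for any vector field in place of the score. *)
  interpret censored_logging px pi0 K
    by (rule censored_logging.intro[OF px pi0_meas K_meas K_prob cond_indep])
  have data_mean: "(\<integral>D. emp_avg n f D \<partial>data_dist n px pi0 K) = (\<integral>y. f y \<partial>sample_dist px pi0 K)"
    if "integrable (sample_dist px pi0 K) f" for f :: "('x, 'a) obs \<Rightarrow> 'p"
    unfolding data_dist_def by (rule integral_emp_avg_PiM[OF prob_space_sample_dist that n])
  show ?thesis
  proof (intro conjI impI)
    assume "pihat0 = pi0"
    then show "(\<integral>D. emp_avg n (ipcw_ips_term pol \<theta> pihat0 Ghat c lam t) D \<partial>data_dist n px pi0 K)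
        = lagr_grad px pol \<theta> K c lam t"
      using data_mean[OF int_ips] integral_ipcw_dr_term[OF int_ips[unfolded ipcw_ips_term_eq_dr_term]
          _ common_support Ghat_pos Ghat_eq]
      by (simp add: ipcw_ips_term_eq_dr_term)
  next
    assume "pihat0 = pi0 \<or> (\<forall>x a. Shat x a t = surv K x a t)"
    then show "(\<integral>D. emp_avg n (ipcw_dr_term pol \<theta> pihat0 Ghat Shat c lam t) D \<partial>data_dist n px pi0 K)
        = lagr_grad px pol \<theta> K c lam t"
      using data_mean[OF int_dr] integral_ipcw_dr_term[OF int_dr _ common_support Ghat_pos Ghat_eq]
      by simp
  qed
qed

end
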